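(* Let $C$ be a coalgebra over a field $K$, and write the right socle of $C$ as $s(C^C)=\bigoplus_{j\in J}T_j$ with $T_j$ simple right subcomodules, and $C=\bigoplus_{j\in J}E(T_j)$ as right $C$-comodules, where $E(T_j)\subseteq C$ is an injective envelope of $T_j$. Let $J_0=\{j\in J\mid \mathrm{Rat}(E(T_j)^* )\neq 0\}$. If $C\cong\mathrm{Rat}(C^*_{C^*})$ as right $C^*$-modules, then ${}^{C}C\cong \mathrm{Rat}\big(\prod_{j\in J_0}E(T_j)^*\big)$, i.e. $C$ is isomorphic as a right $C^*$-module (left $C$-comodule) to the rational part of the right $C^*$-module $\prod_{j\in J_0}E(T_j)^*$.
   Context: $C^*$ is the dual algebra with convolution. $C$ is a right $C^*$-module via $c\cdot c^*=c^*(c_1)c_2$ (equivalently a left $C$-comodule, denoted ${}^CC$); $C^C$ denotes $C$ as a right comodule. A right comodule $M$ is a left $C^*$-module via $c^*\cdot m=m_0c^*(m_1)$ and $M^*$ is a right $C^*$-module via $(\alpha\cdot c^* )(m)=\alpha(c^*\cdot m)$. For a right $C^*$-module $N$, $\mathrm{Rat}(N)$ is the largest submodule whose action comes from a left $C$-comodule structure ($n\cdot c^*=c^*(n_{-1})n_0$). *)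

theory Defs
  imports Complex_Main "HOL-Library.Function_Algebras"
begin

text \<open>The coalgebra C is the whole carrier of a type 'c, a vector space over the
field 'k with scalar multiplication sc.  An element of a tensor product
V (x) W is represented by a finite list of pairs (v_i, w_i), standing for the sum of
the v_i (x) w_i.  Since we are over a field, elements of tensor products of vector
spaces are separated by the product functionals f (x) g (f, g linear functionals),
so equalities of tensors are expressed by testing against f (x) g (resp.
f (x) g (x) h for triple tensors).\<close>

definition dual :: "('k::field \<Rightarrow> 'c::ab_group_add \<Rightarrow> 'c) \<Rightarrow> ('c \<Rightarrow> 'k) set" where
  "dual sc = {f. (\<forall>x y. f (x + y) = f x + f y) \<and> (\<forall>a x. f (sc a x) = a * f x)}"

definition tev :: "('a \<Rightarrow> 'k::field) \<Rightarrow> ('b \<Rightarrow> 'k) \<Rightarrow> ('a \<times> 'b) list \<Rightarrow> 'k" where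
  "tev f g xs = (\<Sum>(x, y)\<leftarrow>xs. f x * g y)"

definition coalgebra ::
  "('k::field \<Rightarrow> 'c::ab_group_add \<Rightarrow> 'c) \<Rightarrow> ('c \<Rightarrow> ('c \<times> 'c) list) \<Rightarrow> ('c \<Rightarrow> 'k) \<Rightarrow> bool" where
  "coalgebra sc \<Delta> \<epsilon> \<longleftrightarrow>
     Vector_Spaces.vector_space sc \<and>
     \<epsilon> \<in> dual sc \<and>
     (\<forall>f\<in>dual sc. \<forall>g\<in>dual sc. \<forall>a b.
        tev f g (\<Delta> (a + b)) = tev f g (\<Delta> a) + tev f g (\<Delta> b)) \<and>
     (\<forall>f\<in>dual sc. \<forall>g\<in>dual sc. \<forall>k a.
        tev f g (\<Delta> (sc k a)) = k * tev f g (\<Delta> a)) \<and>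
     (\<forall>c. (\<Sum>(x, y)\<leftarrow>\<Delta> c. sc (\<epsilon> x) y) = c) \<and>
     (\<forall>c. (\<Sum>(x, y)\<leftarrow>\<Delta> c. sc (\<epsilon> y) x) = c) \<and>
     (\<forall>c. \<forall>f\<in>dual sc. \<forall>g\<in>dual sc. \<forall>h\<in>dual sc.
        (\<Sum>(x, y)\<leftarrow>\<Delta> c. f x * tev g h (\<Delta> y)) =
        (\<Sum>(x, y)\<leftarrow>\<Delta> c. tev f g (\<Delta> x) * h y))"

definition conv :: "('c \<Rightarrow> ('c \<times> 'c) list) \<Rightarrow> ('c \<Rightarrow> 'k::field) \<Rightarrow> ('c \<Rightarrow> 'k) \<Rightarrow> 'c \<Rightarrow> 'k" where
  "conv \<Delta> f g = (\<lambda>c. tev f g (\<Delta> c))"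

definition fscale :: "'k::field \<Rightarrow> ('c \<Rightarrow> 'k) \<Rightarrow> 'c \<Rightarrow> 'k" where
  "fscale a f = (\<lambda>x. a * f x)"

text \<open>C as a right C*-module: c . f = f(c1) c2 (i.e. the left comodule C).\<close>
definition C_ract :: "('k::field \<Rightarrow> 'c::ab_group_add \<Rightarrow> 'c) \<Rightarrow> ('c \<Rightarrow> ('c \<times> 'c) list)
    \<Rightarrow> 'c \<Rightarrow> ('c \<Rightarrow> 'k) \<Rightarrow> 'c" where
  "C_ract sc \<Delta> c f = (\<Sum>(x, y)\<leftarrow>\<Delta> c. sc (f x) y)"

definition subspace_of :: "('k::field \<Rightarrow> 'c::ab_group_add \<Rightarrow> 'c) \<Rightarrow> 'c set \<Rightarrow> bool" where
  "subspace_of sc D \<longleftrightarrow> 0 \<in> D \<and> (\<forall>x\<in>D. \<forall>y\<in>D. x + y \<in> D) \<and> (\<forall>a. \<forall>x\<in>D. sc a x \<in> D)"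

text \<open>D is a right subcomodule of C^C: a subspace with delta(D) contained in D (x) C.\<close>
definition rsubcomod :: "('k::field \<Rightarrow> 'c::ab_group_add \<Rightarrow> 'c) \<Rightarrow> ('c \<Rightarrow> ('c \<times> 'c) list)
    \<Rightarrow> 'c set \<Rightarrow> bool" where
  "rsubcomod sc \<Delta> D \<longleftrightarrow> subspace_of sc D \<and>
     (\<forall>d\<in>D. \<exists>xs. set (map fst xs) \<subseteq> D \<and>
        (\<forall>f\<in>dual sc. \<forall>g\<in>dual sc. tev f g xs = tev f g (\<Delta> d)))"

definition simple_rsubcomod :: "('k::field \<Rightarrow> 'c::ab_group_add \<Rightarrow> 'c) \<Rightarrow> ('c \<Rightarrow> ('c \<times> 'c) list)
    \<Rightarrow> 'c set \<Rightarrow> bool" where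
  "simple_rsubcomod sc \<Delta> D \<longleftrightarrow> rsubcomod sc \<Delta> D \<and> D \<noteq> {0} \<and>
     (\<forall>D'. rsubcomod sc \<Delta> D' \<and> D' \<subseteq> D \<longrightarrow> D' = {0} \<or> D' = D)"

definition rsocle :: "('k::field \<Rightarrow> 'c::ab_group_add \<Rightarrow> 'c) \<Rightarrow> ('c \<Rightarrow> ('c \<times> 'c) list) \<Rightarrow> 'c set" where
  "rsocle sc \<Delta> = {sum x F | F x. finite F \<and> (\<forall>D\<in>F. simple_rsubcomod sc \<Delta> D \<and> x D \<in> D)}"

definition internal_direct_sum :: "('k::field \<Rightarrow> 'c::ab_group_add \<Rightarrow> 'c) \<Rightarrow> 'j set
    \<Rightarrow> ('j \<Rightarrow> 'c set) \<Rightarrow> 'c set \<Rightarrow> bool" where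
  "internal_direct_sum sc J A S \<longleftrightarrow>
     (\<forall>j\<in>J. subspace_of sc (A j)) \<and>
     S = {sum x F | F x. finite F \<and> F \<subseteq> J \<and> (\<forall>j\<in>F. x j \<in> A j)} \<and>
     (\<forall>F x. finite F \<and> F \<subseteq> J \<and> (\<forall>j\<in>F. x j \<in> A j) \<and> sum x F = 0 \<longrightarrow> (\<forall>j\<in>F. x j = 0))"

definition essential_rsub :: "('k::field \<Rightarrow> 'c::ab_group_add \<Rightarrow> 'c) \<Rightarrow> ('c \<Rightarrow> ('c \<times> 'c) list)
    \<Rightarrow> 'c set \<Rightarrow> 'c set \<Rightarrow> bool" where
  "essential_rsub sc \<Delta> T E \<longleftrightarrow> rsubcomod sc \<Delta> T \<and> rsubcomod sc \<Delta> E \<and> T \<subseteq> E \<and>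
     (\<forall>D. rsubcomod sc \<Delta> D \<and> D \<subseteq> E \<and> D \<noteq> {0} \<longrightarrow> D \<inter> T \<noteq> {0})"

text \<open>E* for a subspace E of C: linear functionals on E, represented extensionally
(value 0 outside E).\<close>
definition Edual :: "('k::field \<Rightarrow> 'c::ab_group_add \<Rightarrow> 'c) \<Rightarrow> 'c set \<Rightarrow> ('c \<Rightarrow> 'k) set" where
  "Edual sc E = {\<alpha>. (\<forall>x\<in>E. \<forall>y\<in>E. \<alpha> (x + y) = \<alpha> x + \<alpha> y) \<and>
                    (\<forall>a. \<forall>x\<in>E. \<alpha> (sc a x) = a * \<alpha> x) \<and> (\<forall>x. x \<notin> E \<longrightarrow> \<alpha> x = 0)}"

text \<open>For a right subcomodule E, (alpha . f)(m) = alpha(f . m), where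
f . m = m0 f(m1) = c1 f(c2) for m = c.\<close>
definition Edual_act :: "('k::field \<Rightarrow> 'c::ab_group_add \<Rightarrow> 'c) \<Rightarrow> ('c \<Rightarrow> ('c \<times> 'c) list)
    \<Rightarrow> 'c set \<Rightarrow> ('c \<Rightarrow> 'k) \<Rightarrow> ('c \<Rightarrow> 'k) \<Rightarrow> 'c \<Rightarrow> 'k" where
  "Edual_act sc \<Delta> E \<alpha> f = (\<lambda>m. if m \<in> E then \<alpha> (\<Sum>(x, y)\<leftarrow>\<Delta> m. sc (f y) x) else 0)"

definition prod_dual :: "('k::field \<Rightarrow> 'c::ab_group_add \<Rightarrow> 'c) \<Rightarrow> ('j \<Rightarrow> 'c set) \<Rightarrow> 'j set
    \<Rightarrow> ('j \<Rightarrow> 'c \<Rightarrow> 'k) set" where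
  "prod_dual sc E J0 = {\<phi>. (\<forall>j\<in>J0. \<phi> j \<in> Edual sc (E j)) \<and> (\<forall>j. j \<notin> J0 \<longrightarrow> \<phi> j = 0)}"

definition pscale :: "'k::field \<Rightarrow> ('j \<Rightarrow> 'c \<Rightarrow> 'k) \<Rightarrow> 'j \<Rightarrow> 'c \<Rightarrow> 'k" where
  "pscale a \<phi> = (\<lambda>j x. a * \<phi> j x)"

definition prod_act :: "('k::field \<Rightarrow> 'c::ab_group_add \<Rightarrow> 'c) \<Rightarrow> ('c \<Rightarrow> ('c \<times> 'c) list)
    \<Rightarrow> ('j \<Rightarrow> 'c set) \<Rightarrow> ('j \<Rightarrow> 'c \<Rightarrow> 'k) \<Rightarrow> ('c \<Rightarrow> 'k) \<Rightarrow> 'j \<Rightarrow> 'c \<Rightarrow> 'k" where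
  "prod_act sc \<Delta> E \<phi> f = (\<lambda>j. Edual_act sc \<Delta> (E j) (\<phi> j) f)"

text \<open>A right C*-module is given by a carrier N in a type 'm with addition,
a K-scalar multiplication ms and an action act.  M is a submodule.\<close>
definition submod :: "('k::field \<Rightarrow> 'c::ab_group_add \<Rightarrow> 'c) \<Rightarrow> ('k \<Rightarrow> 'm::comm_monoid_add \<Rightarrow> 'm)
    \<Rightarrow> ('m \<Rightarrow> ('c \<Rightarrow> 'k) \<Rightarrow> 'm) \<Rightarrow> 'm set \<Rightarrow> bool" where
  "submod sc ms act M \<longleftrightarrow> 0 \<in> M \<and> (\<forall>x\<in>M. \<forall>y\<in>M. x + y \<in> M) \<and>
     (\<forall>a. \<forall>x\<in>M. ms a x \<in> M) \<and> (\<forall>x\<in>M. \<forall>f\<in>dual sc. act x f \<in> M)"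

text \<open>M is rational: the action of C* on M comes from a left C-comodule structure,
i.e. for each n in M there are finitely many c_i in C and n_i in M with
n . f = sum f(c_i) n_i for all f in C* (n_{-1} (x) n_0 = sum c_i (x) n_i).\<close>
definition rational_submod :: "('k::field \<Rightarrow> 'c::ab_group_add \<Rightarrow> 'c) \<Rightarrow> ('k \<Rightarrow> 'm::comm_monoid_add \<Rightarrow> 'm)
    \<Rightarrow> ('m \<Rightarrow> ('c \<Rightarrow> 'k) \<Rightarrow> 'm) \<Rightarrow> 'm set \<Rightarrow> bool" where
  "rational_submod sc ms act M \<longleftrightarrow> submod sc ms act M \<and>
     (\<forall>n\<in>M. \<exists>ps :: ('c \<times> 'm) list. set (map snd ps) \<subseteq> M \<and>
        (\<forall>f\<in>dual sc. act n f = (\<Sum>(c, m)\<leftarrow>ps. ms (f c) m)))"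

definition Rat :: "('k::field \<Rightarrow> 'c::ab_group_add \<Rightarrow> 'c) \<Rightarrow> ('k \<Rightarrow> 'm::comm_monoid_add \<Rightarrow> 'm)
    \<Rightarrow> ('m \<Rightarrow> ('c \<Rightarrow> 'k) \<Rightarrow> 'm) \<Rightarrow> 'm set \<Rightarrow> 'm set" where
  "Rat sc ms act N = {n. \<exists>M. M \<subseteq> N \<and> rational_submod sc ms act M \<and> n \<in> M}"

definition rmod_iso :: "('k::field \<Rightarrow> 'c::ab_group_add \<Rightarrow> 'c)
    \<Rightarrow> ('k \<Rightarrow> 'a::comm_monoid_add \<Rightarrow> 'a) \<Rightarrow> 'a set \<Rightarrow> ('a \<Rightarrow> ('c \<Rightarrow> 'k) \<Rightarrow> 'a)
    \<Rightarrow> ('k \<Rightarrow> 'b::comm_monoid_add \<Rightarrow> 'b) \<Rightarrow> 'b set \<Rightarrow> ('b \<Rightarrow> ('c \<Rightarrow> 'k) \<Rightarrow> 'b) \<Rightarrow> bool" where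
  "rmod_iso sc ms1 N1 act1 ms2 N2 act2 \<longleftrightarrow>
     (\<exists>\<psi>. bij_betw \<psi> N1 N2 \<and>
        (\<forall>x\<in>N1. \<forall>y\<in>N1. \<psi> (x + y) = \<psi> x + \<psi> y) \<and>
        (\<forall>a. \<forall>x\<in>N1. \<psi> (ms1 a x) = ms2 a (\<psi> x)) \<and>
        (\<forall>x\<in>N1. \<forall>f\<in>dual sc. \<psi> (act1 x f) = act2 (\<psi> x) f))"

end

theory Submission
  imports Defs
begin

(* Since C is the direct sum of the right subcomodules E(T_j), restricting functionals
   identifies the dual algebra C* with the product of the duals of the E(T_j), as right
   C*-modules; the inverse glues a family of functionals along the direct sum.  Module maps
   carry rational submodules to rational submodules, so each component of a rational element
   of C* is a rational element of the dual of E(T_j), hence vanishes for j outside J0.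
   Therefore restriction maps the rational part of C* isomorphically onto the rational part
   of the product over J0, and composing with C = Rat C* gives the claim. *)

lemma dual_add: "g \<in> dual sc \<Longrightarrow> g (a + b) = g a + g b"
  unfolding dual_def by auto

lemma dual_scale: "g \<in> dual sc \<Longrightarrow> g (sc k a) = k * g a"
  unfolding dual_def by auto

lemma dual_zero: "g \<in> dual sc \<Longrightarrow> g 0 = 0"
  using dual_add[of g sc 0 0] by (metis add.right_neutral add_left_cancel)

lemma dual_diff: "g \<in> dual sc \<Longrightarrow> g (a - b) = g a - g b"
  using dual_add[of g sc "a - b" b] by (simp add: algebra_simps)

lemma dual_sum: "g \<in> dual sc \<Longrightarrow> g (sum y G) = (\<Sum>j\<in>G. g (y j))"
  by (induction G rule: infinite_finite_induct) (auto simp: dual_zero dual_add)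

lemma dual_separates:
  assumes vs: "Vector_Spaces.vector_space (sc :: 'k::field \<Rightarrow> 'c::ab_group_add \<Rightarrow> 'c)"
    and v: "v \<noteq> 0"
  shows "\<exists>g\<in>dual sc. g v \<noteq> 0"
proof -
  interpret vector_space sc by (rule vs)
  have ind: "independent {v}"
    using independent_insertI[of v "{}"] v by (simp add: span_empty)
  define B where "B = extend_basis {v}"
  have iB: "independent B" and vB: "v \<in> B" and sB: "span B = UNIV"
    using extend_basis_superset[OF ind] independent_extend_basis[OF ind] span_extend_basis[OF ind]
    by (auto simp: B_def)
  define g where "g = (\<lambda>x. representation B x v)"
  have "g \<in> dual sc"
    unfolding dual_def g_def using representation_add[OF iB] representation_scale[OF iB] sB by auto
  moreover have "g v = 1"
    unfolding g_def using representation_basis[OF iB vB] by simp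
  ultimately show ?thesis by force
qed

lemma eq_if_dual_eq:
  assumes "Vector_Spaces.vector_space (sc :: 'k::field \<Rightarrow> 'c::ab_group_add \<Rightarrow> 'c)"
    and "\<forall>g\<in>dual sc. g a = g b"
  shows "a = b"
  using dual_separates[OF assms(1), of "a - b"] assms(2) by (auto simp: dual_diff)

lemma Edual_zero: "\<alpha> \<in> Edual sc E \<Longrightarrow> \<alpha> 0 = 0"
  unfolding Edual_def by (cases "0 \<in> E") (auto, metis add.right_neutral add_left_cancel)

lemma prod_dual_zero: "\<psi> \<in> prod_dual sc E J0 \<Longrightarrow> \<psi> j 0 = 0"
  unfolding prod_dual_def by (cases "j \<in> J0") (auto simp: Edual_zero)

lemma prod_dual_add:
  "\<psi> \<in> prod_dual sc E J0 \<Longrightarrow> x \<in> E j \<Longrightarrow> y \<in> E j \<Longrightarrow> \<psi> j (x + y) = \<psi> j x + \<psi> j y"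
  by (cases "j \<in> J0") (auto simp: prod_dual_def Edual_def)

lemma prod_dual_scale:
  "\<psi> \<in> prod_dual sc E J0 \<Longrightarrow> x \<in> E j \<Longrightarrow> \<psi> j (sc a x) = a * \<psi> j x"
  by (cases "j \<in> J0") (auto simp: prod_dual_def Edual_def)

text \<open>The contraction \<open>(id \<otimes> f)\<close> of a tensor; on \<open>\<Delta> c\<close> it gives the left
  \<open>C*\<close>-action \<open>f \<cdot> c = c\<^sub>1 f(c\<^sub>2)\<close> on the right comodule \<open>C\<close>.\<close>
definition contract ::
    "('k::field \<Rightarrow> 'c::ab_group_add \<Rightarrow> 'c) \<Rightarrow> ('c \<Rightarrow> 'k) \<Rightarrow> ('c \<times> 'c) list \<Rightarrow> 'c"
  where "contract sc f xs = (\<Sum>(x, y)\<leftarrow>xs. sc (f y) x)"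

lemma dual_contract: "g \<in> dual sc \<Longrightarrow> g (contract sc f xs) = tev g f xs"
proof (induction xs)
  case Nil
  then show ?case by (simp add: contract_def tev_def dual_zero)
next
  case (Cons p xs)
  then show ?case
    by (cases p) (simp add: contract_def tev_def dual_add dual_scale mult.commute)
qed

lemma contract_in_subspace:
  assumes "subspace_of sc D" and "set (map fst xs) \<subseteq> D"
  shows "contract sc f xs \<in> D"
  using assms(2)
proof (induction xs)
  case Nil
  then show ?case using assms(1) by (simp add: contract_def subspace_of_def)
next
  case (Cons p xs)
  then show ?case using assms(1) by (cases p) (auto simp: contract_def subspace_of_def)
qed

lemma Edual_act_contract:
  "Edual_act sc \<Delta> E \<alpha> f m = (if m \<in> E then \<alpha> (contract sc f (\<Delta> m)) else 0)"
  by (simp add: Edual_act_def contract_def)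

lemma coalgebra_vector_space: "coalgebra sc \<Delta> \<epsilon> \<Longrightarrow> Vector_Spaces.vector_space sc"
  by (simp add: coalgebra_def)

lemma conv_dual:
  assumes "coalgebra sc \<Delta> \<epsilon>" and "f \<in> dual sc" and "g \<in> dual sc"
  shows "conv \<Delta> f g \<in> dual sc"
  using assms unfolding coalgebra_def conv_def by (simp add: dual_def)

lemma contract_comul_zero:
  assumes coalg: "coalgebra sc \<Delta> \<epsilon>" and f: "f \<in> dual sc"
  shows "contract sc f (\<Delta> 0) = 0"
proof (rule eq_if_dual_eq[OF coalgebra_vector_space[OF coalg]], intro ballI)
  fix g assume g: "g \<in> dual sc"
  have "g (contract sc f (\<Delta> 0)) = conv \<Delta> g f 0"
    by (simp add: dual_contract[OF g] conv_def)
  also have "\<dots> = 0"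
    using conv_dual[OF coalg g f] by (rule dual_zero)
  finally show "g (contract sc f (\<Delta> 0)) = g 0"
    using dual_zero[OF g] by simp
qed

lemma rsubcomod_contract_closed:
  assumes coalg: "coalgebra sc \<Delta> \<epsilon>" and D: "rsubcomod sc \<Delta> D"
    and d: "d \<in> D" and f: "f \<in> dual sc"
  shows "contract sc f (\<Delta> d) \<in> D"
proof -
  obtain xs where xs: "set (map fst xs) \<subseteq> D"
      and tev_xs: "\<forall>g\<in>dual sc. \<forall>h\<in>dual sc. tev g h xs = tev g h (\<Delta> d)"
    using D d unfolding rsubcomod_def by blast
  have "contract sc f xs \<in> D"
    using D xs by (simp add: rsubcomod_def contract_in_subspace)
  moreover have "contract sc f (\<Delta> d) = contract sc f xs"
    using tev_xs f
    by (intro eq_if_dual_eq[OF coalgebra_vector_space[OF coalg]]) (simp add: dual_contract)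
  ultimately show ?thesis by simp
qed

lemma submod_linear_combination:
  assumes "submod sc ms act M" and "set (map snd ps) \<subseteq> M"
  shows "(\<Sum>(c, m)\<leftarrow>ps. ms (f c) m) \<in> M"
  using assms(2)
proof (induction ps)
  case Nil
  then show ?case using assms(1) by (simp add: submod_def)
next
  case (Cons p ps)
  then show ?case using assms(1) by (cases p) (auto simp: submod_def)
qed

lemma morphism_linear_combination:
  assumes sub: "submod sc ms1 act1 M"
    and h0: "h 0 = 0" and hadd: "\<forall>x\<in>M. \<forall>y\<in>M. h (x + y) = h x + h y"
    and hscale: "\<forall>a. \<forall>x\<in>M. h (ms1 a x) = ms2 a (h x)"
    and ps: "set (map snd ps) \<subseteq> M"
  shows "h (\<Sum>(c, m)\<leftarrow>ps. ms1 (f c) m) = (\<Sum>(c, m)\<leftarrow>ps. ms2 (f c) (h m))"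
  using ps
proof (induction ps)
  case Nil
  then show ?case using h0 by simp
next
  case (Cons p ps)
  obtain c m where p: "p = (c, m)" by (cases p)
  have "m \<in> M" and ps_M: "set (map snd ps) \<subseteq> M"
    using Cons.prems by (auto simp: p)
  then have "ms1 (f c) m \<in> M" and "(\<Sum>(c, m)\<leftarrow>ps. ms1 (f c) m) \<in> M"
    using sub submod_linear_combination[OF sub ps_M] by (auto simp: submod_def)
  then show ?case
    using Cons.IH[OF ps_M] hadd hscale \<open>m \<in> M\<close> by (simp add: p)
qed

lemma rational_submod_image:
  assumes rat: "rational_submod sc ms1 act1 M"
    and h0: "h 0 = 0" and hadd: "\<forall>x\<in>M. \<forall>y\<in>M. h (x + y) = h x + h y"
    and hscale: "\<forall>a. \<forall>x\<in>M. h (ms1 a x) = ms2 a (h x)"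
    and hact: "\<forall>x\<in>M. \<forall>f\<in>dual sc. h (act1 x f) = act2 (h x) f"
  shows "rational_submod sc ms2 act2 (h ` M)"
proof -
  have sub: "submod sc ms1 act1 M"
    using rat by (simp add: rational_submod_def)
  have "submod sc ms2 act2 (h ` M)"
    unfolding submod_def
  proof (intro conjI ballI allI)
    show "0 \<in> h ` M"
      using sub h0 by (metis image_eqI submod_def)
    show "x + y \<in> h ` M" if "x \<in> h ` M" "y \<in> h ` M" for x y
      using that sub hadd by (auto simp: submod_def) (metis image_eqI)
    show "ms2 a x \<in> h ` M" if "x \<in> h ` M" for a x
      using that sub hscale by (auto simp: submod_def) (metis image_eqI)
    show "act2 x f \<in> h ` M" if "x \<in> h ` M" "f \<in> dual sc" for x f
      using that sub hact by (auto simp: submod_def) (metis image_eqI)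
  qed
  moreover have "\<exists>qs. set (map snd qs) \<subseteq> h ` M \<and>
      (\<forall>f\<in>dual sc. act2 (h m) f = (\<Sum>(c, n)\<leftarrow>qs. ms2 (f c) n))" if m: "m \<in> M" for m
  proof -
    obtain ps where ps: "set (map snd ps) \<subseteq> M"
        and act_ps: "\<forall>f\<in>dual sc. act1 m f = (\<Sum>(c, n)\<leftarrow>ps. ms1 (f c) n)"
      using rat m unfolding rational_submod_def by blast
    define qs where "qs = map (\<lambda>(c, n). (c, h n)) ps"
    have "act2 (h m) f = (\<Sum>(c, n)\<leftarrow>qs. ms2 (f c) n)" if f: "f \<in> dual sc" for f
    proof -
      have "act2 (h m) f = h (act1 m f)"
        using hact m f by simp
      also have "\<dots> = h (\<Sum>(c, n)\<leftarrow>ps. ms1 (f c) n)"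
        using act_ps f by simp
      also have "\<dots> = (\<Sum>(c, n)\<leftarrow>ps. ms2 (f c) (h n))"
        by (rule morphism_linear_combination[OF sub h0 hadd hscale ps])
      finally show ?thesis
        by (simp add: qs_def comp_def split_def)
    qed
    moreover have "set (map snd qs) \<subseteq> h ` M"
      using ps by (auto simp: qs_def)
    ultimately show ?thesis by blast
  qed
  ultimately show ?thesis
    unfolding rational_submod_def by blast
qed

lemma image_Rat_subset:
  assumes maps: "h ` N \<subseteq> N'"
    and h0: "h 0 = 0" and hadd: "\<forall>x\<in>N. \<forall>y\<in>N. h (x + y) = h x + h y"
    and hscale: "\<forall>a. \<forall>x\<in>N. h (ms1 a x) = ms2 a (h x)"
    and hact: "\<forall>x\<in>N. \<forall>f\<in>dual sc. h (act1 x f) = act2 (h x) f"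
  shows "h ` Rat sc ms1 act1 N \<subseteq> Rat sc ms2 act2 N'"
proof
  fix y assume "y \<in> h ` Rat sc ms1 act1 N"
  then obtain x M where "x \<in> M" "y = h x" and M: "M \<subseteq> N" "rational_submod sc ms1 act1 M"
    unfolding Rat_def by blast
  moreover have "rational_submod sc ms2 act2 (h ` M)"
  proof (rule rational_submod_image[where h = h, OF M(2) h0])
    show "\<forall>x\<in>M. \<forall>y\<in>M. h (x + y) = h x + h y" using M(1) hadd by blast
    show "\<forall>a. \<forall>x\<in>M. h (ms1 a x) = ms2 a (h x)" using M(1) hscale by blast
    show "\<forall>x\<in>M. \<forall>f\<in>dual sc. h (act1 x f) = act2 (h x) f" using M(1) hact by blast
  qed
  moreover have "h ` M \<subseteq> N'"
    using M(1) maps by blast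
  ultimately show "y \<in> Rat sc ms2 act2 N'"
    unfolding Rat_def by blast
qed

lemma rmod_iso_trans:
  assumes "rmod_iso sc ms1 N1 act1 ms2 N2 act2" and "rmod_iso sc ms2 N2 act2 ms3 N3 act3"
  shows "rmod_iso sc ms1 N1 act1 ms3 N3 act3"
proof -
  obtain \<psi> where \<psi>: "bij_betw \<psi> N1 N2"
      "\<forall>x\<in>N1. \<forall>y\<in>N1. \<psi> (x + y) = \<psi> x + \<psi> y"
      "\<forall>a. \<forall>x\<in>N1. \<psi> (ms1 a x) = ms2 a (\<psi> x)"
      "\<forall>x\<in>N1. \<forall>f\<in>dual sc. \<psi> (act1 x f) = act2 (\<psi> x) f"
    using assms(1) unfolding rmod_iso_def by blast
  obtain \<chi> where \<chi>: "bij_betw \<chi> N2 N3"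
      "\<forall>x\<in>N2. \<forall>y\<in>N2. \<chi> (x + y) = \<chi> x + \<chi> y"
      "\<forall>a. \<forall>x\<in>N2. \<chi> (ms2 a x) = ms3 a (\<chi> x)"
      "\<forall>x\<in>N2. \<forall>f\<in>dual sc. \<chi> (act2 x f) = act3 (\<chi> x) f"
    using assms(2) unfolding rmod_iso_def by blast
  have "\<psi> x \<in> N2" if "x \<in> N1" for x
    using bij_betwE[OF \<psi>(1)] that by blast
  then show ?thesis
    unfolding rmod_iso_def using \<psi> \<chi>
    by (intro exI[of _ "\<chi> \<circ> \<psi>"]) (simp add: bij_betw_trans)
qed

lemma Rat_subset: "Rat sc ms act N \<subseteq> N"
  unfolding Rat_def by blast

locale coalgebra_decomposition =
  fixes sc :: "'k::field \<Rightarrow> 'c::ab_group_add \<Rightarrow> 'c"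
    and \<Delta> :: "'c \<Rightarrow> ('c \<times> 'c) list"
    and \<epsilon> :: "'c \<Rightarrow> 'k"
    and J :: "'j set"
    and E :: "'j \<Rightarrow> 'c set"
  assumes coalg: "coalgebra sc \<Delta> \<epsilon>"
    and E_rsubcomod: "\<And>j. j \<in> J \<Longrightarrow> rsubcomod sc \<Delta> (E j)"
    and C_direct_sum: "internal_direct_sum sc J E UNIV"
begin

lemma E_subspace: "j \<in> J \<Longrightarrow> subspace_of sc (E j)"
  using E_rsubcomod by (simp add: rsubcomod_def)

lemma E_zero: "j \<in> J \<Longrightarrow> 0 \<in> E j"
  using E_subspace by (simp add: subspace_of_def)

lemma E_add: "j \<in> J \<Longrightarrow> x \<in> E j \<Longrightarrow> y \<in> E j \<Longrightarrow> x + y \<in> E j"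
  using E_subspace by (simp add: subspace_of_def)

lemma E_scale: "j \<in> J \<Longrightarrow> x \<in> E j \<Longrightarrow> sc a x \<in> E j"
  using E_subspace by (simp add: subspace_of_def)

lemma E_diff:
  assumes "j \<in> J" "x \<in> E j" "y \<in> E j"
  shows "x - y \<in> E j"
proof -
  interpret vector_space sc
    using coalg by (rule coalgebra_vector_space)
  have "x + sc (-1) y \<in> E j"
    using assms E_add E_scale by blast
  then show ?thesis by simp
qed

lemma direct_sum_independent:
  "finite F \<Longrightarrow> F \<subseteq> J \<Longrightarrow> \<forall>j\<in>F. x j \<in> E j \<Longrightarrow> sum x F = 0 \<Longrightarrow> \<forall>j\<in>F. x j = 0"
  using C_direct_sum unfolding internal_direct_sum_def by blast

lemma contract_comul_in_E:
  "j \<in> J \<Longrightarrow> m \<in> E j \<Longrightarrow> f \<in> dual sc \<Longrightarrow> contract sc f (\<Delta> m) \<in> E j"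
  using rsubcomod_contract_closed[OF coalg E_rsubcomod] .

definition decomp :: "'j set \<Rightarrow> ('j \<Rightarrow> 'c) \<Rightarrow> 'c \<Rightarrow> bool" where
  "decomp G y c \<longleftrightarrow>
     finite G \<and> G \<subseteq> J \<and> (\<forall>j\<in>G. y j \<in> E j) \<and> (\<forall>j. j \<notin> G \<longrightarrow> y j = 0) \<and> sum y G = c"

lemma decomp_exists: "\<exists>G y. decomp G y c"
proof -
  have "c \<in> {sum x F | F x. finite F \<and> F \<subseteq> J \<and> (\<forall>j\<in>F. x j \<in> E j)}"
    using C_direct_sum unfolding internal_direct_sum_def by blast
  then obtain F x where F: "c = sum x F" "finite F" "F \<subseteq> J" "\<forall>j\<in>F. x j \<in> E j"
    by blast
  then have "decomp F (\<lambda>j. if j \<in> F then x j else 0) c"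
    by (simp add: decomp_def)
  then show ?thesis by blast
qed

lemma decomp_extend:
  assumes "decomp G y c" and "finite H" "G \<subseteq> H" "H \<subseteq> J"
  shows "decomp H y c"
proof -
  have "y j \<in> E j" if "j \<in> H" for j
    using assms that E_zero unfolding decomp_def by (cases "j \<in> G") auto
  moreover have "sum y G = sum y H"
    using assms by (intro sum.mono_neutral_left) (auto simp: decomp_def)
  ultimately show ?thesis
    using assms unfolding decomp_def by auto
qed

lemma decomp_unique:
  assumes y: "decomp G y c" and z: "decomp H z c"
  shows "y = z"
proof
  fix j
  let ?K = "G \<union> H"
  have K: "finite ?K" "?K \<subseteq> J"
    using y z by (auto simp: decomp_def)
  have y': "decomp ?K y c" and z': "decomp ?K z c"
    using decomp_extend[OF y K(1) _ K(2)] decomp_extend[OF z K(1) _ K(2)] by auto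
  have "(\<Sum>i\<in>?K. y i - z i) = 0"
    using y' z' by (simp add: decomp_def sum_subtractf)
  moreover have "y i - z i \<in> E i" if "i \<in> ?K" for i
    using that y' z' K(2) by (intro E_diff) (auto simp: decomp_def)
  ultimately have "y i = z i" if "i \<in> ?K" for i
    using direct_sum_independent[OF K, of "\<lambda>i. y i - z i"] that by simp
  moreover have "y i = z i" if "i \<notin> ?K" for i
    using that y z by (simp add: decomp_def)
  ultimately show "y j = z j"
    by blast
qed

definition component :: "'c \<Rightarrow> 'j \<Rightarrow> 'c" where
  "component c = (SOME y. \<exists>G. decomp G y c)"

lemma component_eq:
  assumes "decomp G y c"
  shows "component c = y"
proof -
  have "\<exists>H. decomp H (component c) c"
    unfolding component_def
    by (rule someI_ex[of "\<lambda>y. \<exists>G. decomp G y c"]) (use assms in blast)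
  then obtain H where "decomp H (component c) c" ..
  then show ?thesis
    using assms by (rule decomp_unique)
qed

lemma decomp_add:
  assumes y: "decomp G y a" and z: "decomp H z b"
  shows "decomp (G \<union> H) (\<lambda>j. y j + z j) (a + b)"
proof -
  have K: "finite (G \<union> H)" "G \<union> H \<subseteq> J"
    using y z by (auto simp: decomp_def)
  have "decomp (G \<union> H) y a" and "decomp (G \<union> H) z b"
    using decomp_extend[OF y K(1) _ K(2)] decomp_extend[OF z K(1) _ K(2)] by auto
  then show ?thesis
    using E_add K by (auto simp: decomp_def sum.distrib)
qed

lemma decomp_scale: "decomp G y a \<Longrightarrow> decomp G (\<lambda>j. sc k (y j)) (sc k a)"
proof -
  interpret vector_space sc
    using coalg by (rule coalgebra_vector_space)
  show "decomp G y a \<Longrightarrow> decomp G (\<lambda>j. sc k (y j)) (sc k a)"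
    using E_scale by (auto simp: decomp_def scale_sum_right)
qed

lemma decomp_single:
  "j \<in> J \<Longrightarrow> m \<in> E j \<Longrightarrow> decomp {j} (\<lambda>i. if i = j then m else 0) m"
  by (auto simp: decomp_def)

text \<open>The inverse of restricting functionals on \<open>C = \<Oplus> E j\<close> to the summands.\<close>
definition glue :: "('j \<Rightarrow> 'c \<Rightarrow> 'k) \<Rightarrow> 'c \<Rightarrow> 'k" where
  "glue \<psi> c = (\<Sum>j\<in>{j. component c j \<noteq> 0}. \<psi> j (component c j))"

lemma glue_decomp:
  assumes d: "decomp G y c" and \<psi>0: "\<And>j. \<psi> j 0 = 0"
  shows "glue \<psi> c = (\<Sum>j\<in>G. \<psi> j (y j))"
proof -
  have "{j. y j \<noteq> 0} \<subseteq> G" "finite G"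
    using d by (auto simp: decomp_def)
  then have "(\<Sum>j\<in>{j. y j \<noteq> 0}. \<psi> j (y j)) = (\<Sum>j\<in>G. \<psi> j (y j))"
    by (intro sum.mono_neutral_left) (auto simp: \<psi>0)
  then show ?thesis
    unfolding glue_def component_eq[OF d] .
qed

lemma glue_on_E:
  assumes "j \<in> J" "m \<in> E j" and "\<And>i. \<psi> i 0 = 0"
  shows "glue \<psi> m = \<psi> j m"
  using glue_decomp[where \<psi> = \<psi>, OF decomp_single[OF assms(1,2)] assms(3)] by simp

lemma glue_zero: "glue 0 = 0"
  by (rule ext) (simp add: glue_def)

lemma glue_add: "glue (\<psi>1 + \<psi>2) = glue \<psi>1 + glue \<psi>2"
  by (rule ext) (simp add: glue_def sum.distrib)

lemma glue_scale: "glue (pscale a \<psi>) = fscale a (glue \<psi>)"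
  by (rule ext) (simp add: glue_def pscale_def fscale_def sum_distrib_left)

lemma glue_dual:
  assumes \<psi>: "\<psi> \<in> prod_dual sc E J0"
  shows "glue \<psi> \<in> dual sc"
  unfolding dual_def
proof (intro CollectI conjI allI)
  note \<psi>0 = prod_dual_zero[OF \<psi>]
  fix a b
  obtain G y H z where y: "decomp G y a" and z: "decomp H z b"
    using decomp_exists by meson
  have K: "finite (G \<union> H)" "G \<union> H \<subseteq> J"
    using y z by (auto simp: decomp_def)
  have y': "decomp (G \<union> H) y a" and z': "decomp (G \<union> H) z b"
    using decomp_extend[OF y K(1) _ K(2)] decomp_extend[OF z K(1) _ K(2)] by auto
  have "glue \<psi> (a + b) = (\<Sum>j\<in>G \<union> H. \<psi> j (y j + z j))"
    using glue_decomp[where \<psi> = \<psi>, OF decomp_add[OF y z] \<psi>0] .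
  also have "\<dots> = (\<Sum>j\<in>G \<union> H. \<psi> j (y j)) + (\<Sum>j\<in>G \<union> H. \<psi> j (z j))"
    using y' z' prod_dual_add[OF \<psi>] by (simp add: decomp_def sum.distrib[symmetric])
  also have "\<dots> = glue \<psi> a + glue \<psi> b"
    using glue_decomp[where \<psi> = \<psi>, OF y' \<psi>0] glue_decomp[where \<psi> = \<psi>, OF z' \<psi>0]
    by simp
  finally show "glue \<psi> (a + b) = glue \<psi> a + glue \<psi> b" .
next
  note \<psi>0 = prod_dual_zero[OF \<psi>]
  fix k a
  obtain G y where y: "decomp G y a"
    using decomp_exists by blast
  have "glue \<psi> (sc k a) = (\<Sum>j\<in>G. \<psi> j (sc k (y j)))"
    using glue_decomp[where \<psi> = \<psi>, OF decomp_scale[OF y] \<psi>0] .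
  also have "\<dots> = k * glue \<psi> a"
    using y prod_dual_scale[OF \<psi>] glue_decomp[where \<psi> = \<psi>, OF y \<psi>0]
    by (simp add: decomp_def sum_distrib_left)
  finally show "glue \<psi> (sc k a) = k * glue \<psi> a" .
qed

lemma prod_act_zero:
  assumes "\<psi> \<in> prod_dual sc E J0" and "f \<in> dual sc"
  shows "prod_act sc \<Delta> E \<psi> f j 0 = 0"
  using contract_comul_zero[OF coalg assms(2)] prod_dual_zero[OF assms(1)]
  by (simp add: prod_act_def Edual_act_contract)

lemma glue_act:
  assumes \<psi>: "\<psi> \<in> prod_dual sc E J0" and f: "f \<in> dual sc"
  shows "glue (prod_act sc \<Delta> E \<psi> f) = conv \<Delta> (glue \<psi>) f"
proof
  fix c
  obtain G y where y: "decomp G y c"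
    using decomp_exists by blast
  then have G: "\<And>j. j \<in> G \<Longrightarrow> j \<in> J \<and> y j \<in> E j"
    by (auto simp: decomp_def)
  have "glue (prod_act sc \<Delta> E \<psi> f) c = (\<Sum>j\<in>G. \<psi> j (contract sc f (\<Delta> (y j))))"
    using glue_decomp[where \<psi> = "prod_act sc \<Delta> E \<psi> f", OF y prod_act_zero[OF \<psi> f]] G
    by (simp add: prod_act_def Edual_act_contract)
  also have "\<dots> = (\<Sum>j\<in>G. glue \<psi> (contract sc f (\<Delta> (y j))))"
  proof (rule sum.cong[OF refl])
    fix j assume "j \<in> G"
    then have "contract sc f (\<Delta> (y j)) \<in> E j" and "j \<in> J"
      using G contract_comul_in_E f by auto
    then show "\<psi> j (contract sc f (\<Delta> (y j))) = glue \<psi> (contract sc f (\<Delta> (y j)))"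
      using glue_on_E[where \<psi> = \<psi>] prod_dual_zero[OF \<psi>] by simp
  qed
  also have "\<dots> = (\<Sum>j\<in>G. conv \<Delta> (glue \<psi>) f (y j))"
    using dual_contract[OF glue_dual[OF \<psi>]] by (simp add: conv_def)
  also have "\<dots> = conv \<Delta> (glue \<psi>) f c"
    using dual_sum[OF conv_dual[OF coalg glue_dual[OF \<psi>] f]] y by (metis decomp_def)
  finally show "glue (prod_act sc \<Delta> E \<psi> f) c = conv \<Delta> (glue \<psi>) f c" .
qed

definition res :: "'j \<Rightarrow> ('c \<Rightarrow> 'k) \<Rightarrow> 'c \<Rightarrow> 'k" where
  "res j \<phi> = (\<lambda>x. if x \<in> E j then \<phi> x else 0)"

lemma res_Edual: "j \<in> J \<Longrightarrow> \<phi> \<in> dual sc \<Longrightarrow> res j \<phi> \<in> Edual sc (E j)"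
  unfolding Edual_def res_def using E_add E_scale by (auto simp: dual_add dual_scale)

lemma res_act:
  assumes "j \<in> J" and "\<phi> \<in> dual sc" and "f \<in> dual sc"
  shows "res j (conv \<Delta> \<phi> f) = Edual_act sc \<Delta> (E j) (res j \<phi>) f"
  using assms contract_comul_in_E dual_contract[OF assms(2)]
  by (auto simp: res_def Edual_act_contract conv_def)

lemma res_Rat:
  assumes "j \<in> J"
  shows "res j ` Rat sc fscale (conv \<Delta>) (dual sc)
           \<subseteq> Rat sc fscale (Edual_act sc \<Delta> (E j)) (Edual sc (E j))"
  using assms res_Edual res_act
  by (intro image_Rat_subset) (auto simp: res_def fscale_def)

definition res_prod :: "'j set \<Rightarrow> ('c \<Rightarrow> 'k) \<Rightarrow> 'j \<Rightarrow> 'c \<Rightarrow> 'k" where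
  "res_prod J0 \<phi> = (\<lambda>j. if j \<in> J0 then res j \<phi> else 0)"

lemma res_prod_prod_dual:
  "J0 \<subseteq> J \<Longrightarrow> \<phi> \<in> dual sc \<Longrightarrow> res_prod J0 \<phi> \<in> prod_dual sc E J0"
  unfolding prod_dual_def res_prod_def using res_Edual by auto

lemma res_prod_zero: "res_prod J0 0 = 0"
  by (intro ext) (simp add: res_prod_def res_def)

lemma res_prod_add: "res_prod J0 (\<phi> + \<phi>') = res_prod J0 \<phi> + res_prod J0 \<phi>'"
  by (intro ext) (simp add: res_prod_def res_def)

lemma res_prod_scale: "res_prod J0 (fscale a \<phi>) = pscale a (res_prod J0 \<phi>)"
  by (intro ext) (simp add: res_prod_def res_def fscale_def pscale_def)

lemma res_prod_act:
  assumes "J0 \<subseteq> J" and "\<phi> \<in> dual sc" and "f \<in> dual sc"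
  shows "res_prod J0 (conv \<Delta> \<phi> f) = prod_act sc \<Delta> E (res_prod J0 \<phi>) f"
proof
  fix j
  show "res_prod J0 (conv \<Delta> \<phi> f) j = prod_act sc \<Delta> E (res_prod J0 \<phi>) f j"
    using assms res_act[of j \<phi> f]
    by (cases "j \<in> J0") (auto simp: res_prod_def prod_act_def Edual_act_contract fun_eq_iff)
qed

lemma res_prod_glue:
  assumes "J0 \<subseteq> J" and \<psi>: "\<psi> \<in> prod_dual sc E J0"
  shows "res_prod J0 (glue \<psi>) = \<psi>"
proof (intro ext)
  fix j x
  show "res_prod J0 (glue \<psi>) j x = \<psi> j x"
  proof (cases "j \<in> J0 \<and> x \<in> E j")
    case True
    then show ?thesis
      using assms glue_on_E[where \<psi> = \<psi>] prod_dual_zero[OF \<psi>]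
      by (auto simp: res_prod_def res_def)
  next
    case False
    then show ?thesis
      using \<psi> by (auto simp: res_prod_def res_def prod_dual_def Edual_def)
  qed
qed

text \<open>Here the rationality of \<open>\<phi>\<close> is used: its restrictions to the \<open>E j\<close> with
  \<open>j \<notin> J0\<close> are rational and hence vanish.\<close>
lemma glue_res_prod:
  assumes "J0 \<subseteq> J" and Rat_vanish: "\<And>j. j \<in> J - J0 \<Longrightarrow>
      Rat sc fscale (Edual_act sc \<Delta> (E j)) (Edual sc (E j)) = {0}"
    and \<phi>: "\<phi> \<in> Rat sc fscale (conv \<Delta>) (dual sc)"
  shows "glue (res_prod J0 \<phi>) = \<phi>"
proof
  fix c
  obtain G y where y: "decomp G y c"
    using decomp_exists by blast
  have \<phi>_dual: "\<phi> \<in> dual sc"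
    using \<phi> Rat_subset by blast
  have "res_prod J0 \<phi> j (y j) = \<phi> (y j)" if "j \<in> G" for j
  proof (cases "j \<in> J0")
    case True
    then show ?thesis
      using y that by (auto simp: res_prod_def res_def decomp_def)
  next
    case False
    have "j \<in> J" "y j \<in> E j"
      using y that by (auto simp: decomp_def)
    then have "res j \<phi> = 0"
      using res_Rat \<phi> Rat_vanish False by blast
    moreover have "\<phi> (y j) = res j \<phi> (y j)"
      using \<open>y j \<in> E j\<close> by (simp add: res_def)
    ultimately show ?thesis
      using False by (simp add: res_prod_def)
  qed
  then have "glue (res_prod J0 \<phi>) c = (\<Sum>j\<in>G. \<phi> (y j))"
    using glue_decomp[where \<psi> = "res_prod J0 \<phi>", OF y]
      prod_dual_zero[OF res_prod_prod_dual[OF assms(1) \<phi>_dual]] by simp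
  also have "\<dots> = \<phi> c"
    using dual_sum[OF \<phi>_dual] y by (metis decomp_def)
  finally show "glue (res_prod J0 \<phi>) c = \<phi> c" .
qed

lemma Rat_dual_iso_Rat_prod_dual:
  assumes "J0 \<subseteq> J" and "\<And>j. j \<in> J - J0 \<Longrightarrow>
      Rat sc fscale (Edual_act sc \<Delta> (E j)) (Edual sc (E j)) = {0}"
  shows "rmod_iso sc fscale (Rat sc fscale (conv \<Delta>) (dual sc)) (conv \<Delta>)
           pscale (Rat sc pscale (prod_act sc \<Delta> E) (prod_dual sc E J0)) (prod_act sc \<Delta> E)"
proof -
  let ?RC = "Rat sc fscale (conv \<Delta>) (dual sc)"
  let ?RP = "Rat sc pscale (prod_act sc \<Delta> E) (prod_dual sc E J0)"
  have "res_prod J0 ` ?RC \<subseteq> ?RP"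
  proof (rule image_Rat_subset)
    show "res_prod J0 ` dual sc \<subseteq> prod_dual sc E J0"
      using res_prod_prod_dual[OF assms(1)] by blast
    show "\<forall>\<phi>\<in>dual sc. \<forall>f\<in>dual sc.
        res_prod J0 (conv \<Delta> \<phi> f) = prod_act sc \<Delta> E (res_prod J0 \<phi>) f"
      using res_prod_act[OF assms(1)] by blast
  qed (simp_all add: res_prod_zero res_prod_add res_prod_scale)
  moreover have "glue ` ?RP \<subseteq> ?RC"
  proof (rule image_Rat_subset)
    show "glue ` prod_dual sc E J0 \<subseteq> dual sc"
      using glue_dual by blast
    show "\<forall>\<psi>\<in>prod_dual sc E J0. \<forall>f\<in>dual sc.
        glue (prod_act sc \<Delta> E \<psi> f) = conv \<Delta> (glue \<psi>) f"
      using glue_act by blast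
  qed (simp_all add: glue_zero glue_add glue_scale)
  moreover have "\<forall>\<phi>\<in>?RC. glue (res_prod J0 \<phi>) = \<phi>"
    using glue_res_prod[OF assms] by blast
  moreover have "\<forall>\<psi>\<in>?RP. res_prod J0 (glue \<psi>) = \<psi>"
    using res_prod_glue[OF assms(1)] Rat_subset by blast
  ultimately have "bij_betw (res_prod J0) ?RC ?RP"
    by (intro bij_betw_byWitness[where f' = glue])
  moreover have "\<forall>\<phi>\<in>?RC. \<forall>f\<in>dual sc.
      res_prod J0 (conv \<Delta> \<phi> f) = prod_act sc \<Delta> E (res_prod J0 \<phi>) f"
    using res_prod_act[OF assms(1)] Rat_subset by blast
  ultimately show ?thesis
    unfolding rmod_iso_def using res_prod_add res_prod_scale by blast
qed

end

theorem corollary2p2: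
  fixes sc :: "'k::field \<Rightarrow> 'c::ab_group_add \<Rightarrow> 'c"
    and \<Delta> :: "'c \<Rightarrow> ('c \<times> 'c) list"
    and \<epsilon> :: "'c \<Rightarrow> 'k"
    and J :: "'j set"
    and T E :: "'j \<Rightarrow> 'c set"
  assumes coalg: "coalgebra sc \<Delta> \<epsilon>"
    and T_simple: "\<forall>j\<in>J. simple_rsubcomod sc \<Delta> (T j)"
    and socle: "internal_direct_sum sc J T (rsocle sc \<Delta>)"
    and E_env: "\<forall>j\<in>J. rsubcomod sc \<Delta> (E j) \<and> T j \<subseteq> E j \<and> essential_rsub sc \<Delta> (T j) (E j)"
    and C_decomp: "internal_direct_sum sc J E UNIV"
    and iso: "rmod_iso sc sc UNIV (C_ract sc \<Delta>) fscale (Rat sc fscale (conv \<Delta>) (dual sc)) (conv \<Delta>)"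
  shows "rmod_iso sc sc UNIV (C_ract sc \<Delta>)
           pscale
           (Rat sc pscale (prod_act sc \<Delta> E)
              (prod_dual sc E {j \<in> J. Rat sc fscale (Edual_act sc \<Delta> (E j)) (Edual sc (E j)) \<noteq> {0}}))
           (prod_act sc \<Delta> E)"
proof -
  interpret coalgebra_decomposition sc \<Delta> \<epsilon> J E
    using coalg E_env C_decomp by unfold_locales auto
  have "rmod_iso sc fscale (Rat sc fscale (conv \<Delta>) (dual sc)) (conv \<Delta>)
          pscale (Rat sc pscale (prod_act sc \<Delta> E)
            (prod_dual sc E {j \<in> J. Rat sc fscale (Edual_act sc \<Delta> (E j)) (Edual sc (E j)) \<noteq> {0}}))
          (prod_act sc \<Delta> E)"
    by (rule Rat_dual_iso_Rat_prod_dual) auto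
  with iso show ?thesis
    by (rule rmod_iso_trans)
qed

end
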